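(* Let $G$ and $H$ be finite groups, $U\leq G\times H$ a subdirect product, and $A$ an abelian group satisfying the Hypothesis for a set of primes $\pi$ which contains every prime divisor of $|G|$ and $|H|$. Then the natural restriction map $\rho:\mathrm{Hom}(G\times H,A)\to\mathrm{Hom}(U,A)$ is surjective if and only if $G'\cap k_1(U)=k_1(U')$, or equivalently if and only if $H'\cap k_2(U)=k_2(U')$.
   Context: For $U\leq G\times H$: $p_1(U)=\{g:\exists h,(g,h)\in U\}$, $p_2(U)=\{h:\exists g,(g,h)\in U\}$, $k_1(U)=\{g:(g,1)\in U\}$, $k_2(U)=\{h:(1,h)\in U\}$; $U$ is a subdirect product if $p_1(U)=G$, $p_2(U)=H$. $X'$ denotes the commutator subgroup of a group $X$. An abelian group $A$ satisfies the Hypothesis (with set of primes $\pi$) if there is a unique set of primes $\pi$ such that for every $n\in\mathbb{N}$ the $n$-torsion part of $A$ is cyclic of order $n_\pi$ (the $\pi$-part of $n$). *)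

theory Defs
  imports "HOL-Algebra.Algebra" "HOL-Computational_Algebra.Primes"
begin

definition pi_part :: "nat set \<Rightarrow> nat \<Rightarrow> nat" where
  "pi_part \<pi> n = (\<Prod>p\<in>prime_factors n \<inter> \<pi>. p ^ multiplicity p n)"

definition torsion_part :: "('a, 'b) monoid_scheme \<Rightarrow> nat \<Rightarrow> 'a set" where
  "torsion_part A n = {a \<in> carrier A. a [^]\<^bsub>A\<^esub> n = \<one>\<^bsub>A\<^esub>}"

definition satisfies_hypothesis :: "('a, 'b) monoid_scheme \<Rightarrow> nat set \<Rightarrow> bool" where
  "satisfies_hypothesis A \<pi> \<longleftrightarrow> (\<forall>p\<in>\<pi>. Factorial_Ring.prime p) \<and>
     (\<forall>n::nat. n \<ge> 1 \<longrightarrow>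
        cyclic_group (A\<lparr>carrier := torsion_part A n\<rparr>) \<and>
        card (torsion_part A n) = pi_part \<pi> n)"

definition k1 :: "('b, 'c) monoid_scheme \<Rightarrow> ('a \<times> 'b) set \<Rightarrow> 'a set" where
  "k1 H U = {g. (g, \<one>\<^bsub>H\<^esub>) \<in> U}"

definition k2 :: "('a, 'c) monoid_scheme \<Rightarrow> ('a \<times> 'b) set \<Rightarrow> 'b set" where
  "k2 G U = {h. (\<one>\<^bsub>G\<^esub>, h) \<in> U}"

definition subdirect :: "('a, 'c) monoid_scheme \<Rightarrow> ('b, 'd) monoid_scheme \<Rightarrow> ('a \<times> 'b) set \<Rightarrow> bool" where
  "subdirect G H U \<longleftrightarrow> subgroup U (G \<times>\<times> H) \<and> fst ` U = carrier G \<and> snd ` U = carrier H"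

definition restriction_surjective ::
  "('a, 'c) monoid_scheme \<Rightarrow> ('b, 'd) monoid_scheme \<Rightarrow> ('a \<times> 'b) set \<Rightarrow> ('e, 'f) monoid_scheme \<Rightarrow> bool" where
  "restriction_surjective G H U A \<longleftrightarrow>
     (\<forall>f \<in> hom ((G \<times>\<times> H)\<lparr>carrier := U\<rparr>) A.
        \<exists>F \<in> hom (G \<times>\<times> H) A. \<forall>u\<in>U. F u = f u)"

end

theory Submission
  imports Defs
begin

(*
  Homomorphisms into the abelian group A kill derived subgroups, and the Hypothesis makes this
  the only obstruction to extending them. Let X be a finite group whose order is a pi-number and
  U a subgroup of X. A homomorphism f : U -> A that kills the intersection of U and X' is first
  extended by 1 over X', giving a homomorphism on the normal subgroup X'U, and then across one
  element c at a time: if B contains X' and m is least with c^m in B, then f(c^m) is killed by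
  the power ord c / m, and since ord c is a pi-number the (ord c)-torsion of A is cyclic of order
  ord c, so f(c^m) has an m-th root a in A; now b c^k |-> f(b) a^k is a well defined
  homomorphism on B<c>. Starting instead from an element of order m of A on the cyclic group <u>,
  where m is least with u^m in X', the same extension gives for every u outside X' a
  homomorphism X -> A that is nontrivial at u. Hence every homomorphism U -> A extends to X iff
  the intersection of U and X' lies in U'.
  For a subdirect product U of G x H we have (G x H)' = G' x H', and U' projects onto G' and
  onto H'. Hence the intersection of U and (G x H)' lies in U' as soon as its part in the kernel
  of one projection does, and these two parts are described by k1 and k2.
*)

section \<open>Pi-numbers and the Hypothesis\<close>

definition pi_number :: "nat set \<Rightarrow> nat \<Rightarrow> bool" where
  "pi_number \<pi> n \<longleftrightarrow> n > 0 \<and> (\<forall>p. Factorial_Ring.prime p \<longrightarrow> p dvd n \<longrightarrow> p \<in> \<pi>)"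

lemma pi_part_pi_number: "pi_number \<pi> n \<Longrightarrow> pi_part \<pi> n = n"
proof -
  assume n: "pi_number \<pi> n"
  hence "prime_factors n \<inter> \<pi> = prime_factors n"
    unfolding pi_number_def by (auto simp: prime_factors_dvd)
  thus ?thesis using n unfolding pi_part_def pi_number_def
    by (metis prime_factorization_nat)
qed

lemma pi_number_dvd: "pi_number \<pi> n \<Longrightarrow> m dvd n \<Longrightarrow> pi_number \<pi> m"
  unfolding pi_number_def by (metis dvd_trans gr0I dvd_0_left_iff)

lemma pi_number_mult: "pi_number \<pi> m \<Longrightarrow> pi_number \<pi> n \<Longrightarrow> pi_number \<pi> (m * n)"
  unfolding pi_number_def by (auto simp: prime_dvd_mult_iff)

lemma (in comm_group) subgroup_torsion_part: "subgroup (torsion_part G n) G"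
  unfolding torsion_part_def by (rule subgroupI) (auto simp: pow_mult_distrib m_comm nat_pow_inv)

lemma (in comm_group) hypothesis_torsion_generator:
  assumes hyp: "satisfies_hypothesis G \<pi>" and n: "pi_number \<pi> n"
  obtains g where "g \<in> carrier G" "ord g = n" "torsion_part G n = range (\<lambda>k::int. g [^] k)"
proof -
  define T where "T = torsion_part G n"
  have sub: "subgroup T G" unfolding T_def by (rule subgroup_torsion_part)
  interpret T: group "G\<lparr>carrier := T\<rparr>" using subgroup.subgroup_is_group[OF sub is_group] .
  have "n \<ge> 1" using n unfolding pi_number_def by simp
  hence "cyclic_group (G\<lparr>carrier := T\<rparr>)" and card: "card T = n"
    using hyp pi_part_pi_number[OF n] unfolding satisfies_hypothesis_def T_def by simp_all
  then obtain g where g: "g \<in> T" and "T = range (\<lambda>k::int. g [^]\<^bsub>G\<lparr>carrier := T\<rparr>\<^esub> k)"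
    using T.cyclic_group by auto
  hence T: "T = range (\<lambda>k::int. g [^] k)" using int_pow_consistent[OF sub g] by simp
  have gG: "g \<in> carrier G" using g sub subgroup.subset by blast
  have "ord g = card (generate G {g})" by (rule generate_pow_card[OF gG])
  also have "generate G {g} = T" using generate_pow[OF gG] T by auto
  finally show thesis using that gG card T unfolding T_def by simp
qed

lemma (in comm_group) hypothesis_root_exists:
  assumes hyp: "satisfies_hypothesis G \<pi>" and mk: "pi_number \<pi> (m * k)"
    and x: "x \<in> carrier G" and xk: "x [^] k = \<one>"
  shows "\<exists>a\<in>carrier G. a [^] m = x"
proof -
  obtain g where g: "g \<in> carrier G" and ord: "ord g = m * k"
    and T: "torsion_part G (m * k) = range (\<lambda>j::int. g [^] j)"
    using hypothesis_torsion_generator[OF hyp mk] .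
  have "x [^] (m * k) = \<one>" using x xk by (simp add: nat_pow_pow[symmetric] mult.commute)
  then obtain j :: int where j: "x = g [^] j" using x T unfolding torsion_part_def by auto
  have "g [^] (j * int k) = \<one>" using xk g j by (simp add: int_pow_pow int_pow_int[symmetric])
  hence "int m * int k dvd j * int k" using int_pow_eq_id[OF g] ord by simp
  hence "int m dvd j" using mk unfolding pi_number_def by auto
  then obtain t where "j = int m * t" by blast
  hence "(g [^] t) [^] m = x" using g j by (simp add: int_pow_int[symmetric] int_pow_pow mult.commute)
  thus ?thesis using g by blast
qed

section \<open>Extending homomorphisms into A\<close>

lemma fun_factors_through:
  assumes "\<And>x y. x \<in> S \<Longrightarrow> y \<in> S \<Longrightarrow> f x = f y \<Longrightarrow> g x = g y"
  shows "\<exists>h. \<forall>x\<in>S. h (f x) = g x"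
proof (intro exI[of _ "\<lambda>z. g (inv_into S f z)"] ballI)
  fix x assume x: "x \<in> S"
  hence "f x \<in> f ` S" by blast
  hence "inv_into S f (f x) \<in> S" "f (inv_into S f (f x)) = f x"
    by (rule inv_into_into, rule f_inv_into_f)
  thus "g (inv_into S f (f x)) = g x" using assms x by blast
qed

lemma (in group) group_hom_on_subgroup:
  "subgroup B G \<Longrightarrow> group A \<Longrightarrow> \<phi> \<in> hom (G\<lparr>carrier := B\<rparr>) A \<Longrightarrow> group_hom (G\<lparr>carrier := B\<rparr>) A \<phi>"
  by (simp add: group_hom_def group_hom_axioms_def subgroup_imp_group)

lemma (in group) commutator_mem_derived:
  "x \<in> carrier G \<Longrightarrow> y \<in> carrier G \<Longrightarrow> x \<otimes> y \<otimes> inv x \<otimes> inv y \<in> derived G (carrier G)"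
  unfolding derived_def by (rule generate.incl) blast

lemma (in group) hom_to_comm_group_kills_derived:
  assumes "comm_group A" "F \<in> hom G A" "x \<in> derived G (carrier G)"
  shows "F x = \<one>\<^bsub>A\<^esub>"
proof -
  interpret A: comm_group A by fact
  interpret F: group_hom G A F using assms(2) A.is_group by (simp add: group_hom_def group_hom_axioms_def)
  have "F ` derived G (carrier G) = derived A (F ` carrier G)" by (simp add: F.derived_img)
  also have "\<dots> = {\<one>\<^bsub>A\<^esub>}" using A.derived_eq_singleton F.hom_closed by blast
  finally show ?thesis using assms(3) by blast
qed

lemma (in group) normal_if_derived_subset:
  assumes B: "subgroup B G" and DB: "derived G (carrier G) \<subseteq> B"
  shows "B \<lhd> G"
proof (rule normal_invI[OF B])
  fix x b assume x: "x \<in> carrier G" and b: "b \<in> B"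
  have bG: "b \<in> carrier G" using b B subgroup.subset by blast
  have "x \<otimes> b \<otimes> inv x = (x \<otimes> b \<otimes> inv x \<otimes> inv b) \<otimes> b" using x bG by (simp add: m_assoc)
  moreover have "x \<otimes> b \<otimes> inv x \<otimes> inv b \<in> B" using commutator_mem_derived[OF x bG] DB by blast
  ultimately show "x \<otimes> b \<otimes> inv x \<in> B" using b B by (metis subgroup.m_closed)
qed

lemma (in group) int_pow_mem_subgroup_iff_dvd:
  assumes fin: "finite (carrier G)" and B: "subgroup B G" and c: "c \<in> carrier G"
  obtains m where "\<And>k::int. c [^] k \<in> B \<longleftrightarrow> int m dvd k"
proof -
  define S where "S = {n::nat. 0 < n \<and> c [^] n \<in> B}"
  have "ord c \<in> S" using ord_ge_1[OF fin c] c subgroup.one_closed[OF B] unfolding S_def by auto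
  define m where "m = (LEAST n. n \<in> S)"
  have m: "0 < m" "c [^] m \<in> B" using LeastI[of "\<lambda>n. n \<in> S", OF \<open>ord c \<in> S\<close>] unfolding m_def S_def by auto
  have cm: "c [^] int m \<in> B" using m by (simp add: int_pow_int)
  have "c [^] k \<in> B \<longleftrightarrow> int m dvd k" for k :: int
  proof
    assume "int m dvd k"
    then obtain t where "k = int m * t" by blast
    thus "c [^] k \<in> B" using subgroup_int_pow_closed[OF B cm] c by (simp add: int_pow_pow)
  next
    assume ck: "c [^] k \<in> B"
    define r where "r = k mod int m"
    have r: "0 \<le> r" "r < int m" unfolding r_def using m by auto
    have "c [^] k = (c [^] int m) [^] (k div int m) \<otimes> c [^] r"
      unfolding r_def using c by (metis int_pow_mult int_pow_pow div_mult_mod_eq mult.commute)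
    hence "c [^] r = inv ((c [^] int m) [^] (k div int m)) \<otimes> c [^] k"
      using c by (simp add: inv_solve_left)
    hence "c [^] nat r \<in> B" using ck subgroup_int_pow_closed[OF B cm] r B
      by (simp add: subgroup.m_closed subgroup.m_inv_closed flip: int_pow_int)
    hence "nat r = 0"
      using Least_le[of "\<lambda>n. n \<in> S" "nat r"] r unfolding m_def S_def by (cases "nat r = 0") auto
    hence "r = 0" using r by simp
    thus "int m dvd k" unfolding r_def by auto
  qed
  thus thesis using that by blast
qed

lemma (in group) mult_eq_mult_imp_inter_factor:
  assumes N: "subgroup N G" and K: "subgroup K G"
    and x: "x \<in> N" "x' \<in> N" and y: "y \<in> K" "y' \<in> K" and eq: "x \<otimes> y = x' \<otimes> y'"
  shows "\<exists>z\<in>N \<inter> K. x = x' \<otimes> z \<and> y' = z \<otimes> y"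
proof
  have G: "x \<in> carrier G" "x' \<in> carrier G" "y \<in> carrier G" "y' \<in> carrier G"
    using x y N K subgroup.subset by blast+
  define z where "z = inv x' \<otimes> x"
  show "x = x' \<otimes> z \<and> y' = z \<otimes> y"
  proof
    show "x = x' \<otimes> z" unfolding z_def using G by (simp add: m_assoc[symmetric])
    have "y' = inv x' \<otimes> (x' \<otimes> y')" using G by (simp add: m_assoc[symmetric])
    thus "y' = z \<otimes> y" unfolding z_def using G eq by (simp add: m_assoc)
  qed
  hence "z = y' \<otimes> inv y" using G by (simp add: z_def m_assoc)
  moreover have "z \<in> N" unfolding z_def using x N by (simp add: subgroup.m_closed subgroup.m_inv_closed)
  ultimately show "z \<in> N \<inter> K" using y K by (simp add: subgroup.m_closed subgroup.m_inv_closed)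
qed

lemma (in group) fun_on_set_mult_exists:
  assumes A: "comm_group A" and N: "subgroup N G" and K: "subgroup K G"
    and \<phi>: "\<phi> \<in> hom (G\<lparr>carrier := N\<rparr>) A" and \<psi>: "\<psi> \<in> hom (G\<lparr>carrier := K\<rparr>) A"
    and agree: "\<And>z. z \<in> N \<inter> K \<Longrightarrow> \<phi> z = \<psi> z"
  obtains \<theta> where "\<And>x y. x \<in> N \<Longrightarrow> y \<in> K \<Longrightarrow> \<theta> (x \<otimes> y) = \<phi> x \<otimes>\<^bsub>A\<^esub> \<psi> y"
proof -
  interpret A: comm_group A by fact
  interpret \<phi>: group_hom "G\<lparr>carrier := N\<rparr>" A \<phi> using group_hom_on_subgroup[OF N A.is_group \<phi>] .
  interpret \<psi>: group_hom "G\<lparr>carrier := K\<rparr>" A \<psi> using group_hom_on_subgroup[OF K A.is_group \<psi>] .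
  have well_defined: "\<phi> x \<otimes>\<^bsub>A\<^esub> \<psi> y = \<phi> x' \<otimes>\<^bsub>A\<^esub> \<psi> y'"
    if xy: "x \<in> N" "x' \<in> N" "y \<in> K" "y' \<in> K" "x \<otimes> y = x' \<otimes> y'" for x x' y y'
  proof -
    obtain z where z: "z \<in> N" "z \<in> K" "x = x' \<otimes> z" "y' = z \<otimes> y"
      using mult_eq_mult_imp_inter_factor[OF N K xy] by blast
    have "\<phi> x \<otimes>\<^bsub>A\<^esub> \<psi> y = (\<phi> x' \<otimes>\<^bsub>A\<^esub> \<phi> z) \<otimes>\<^bsub>A\<^esub> \<psi> y"
      using xy z \<phi>.hom_mult by simp
    also have "\<phi> z = \<psi> z" using agree z by blast
    also have "(\<phi> x' \<otimes>\<^bsub>A\<^esub> \<psi> z) \<otimes>\<^bsub>A\<^esub> \<psi> y = \<phi> x' \<otimes>\<^bsub>A\<^esub> \<psi> y'"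
      using xy z \<phi>.hom_closed \<psi>.hom_closed \<psi>.hom_mult by (simp add: A.m_assoc)
    finally show ?thesis .
  qed
  have "\<exists>\<theta>. \<forall>p\<in>N \<times> K. \<theta> (fst p \<otimes> snd p) = \<phi> (fst p) \<otimes>\<^bsub>A\<^esub> \<psi> (snd p)"
    by (rule fun_factors_through, rule well_defined) auto
  thus thesis using that by fastforce
qed

lemma (in group) extend_hom_over_set_mult:
  assumes A: "comm_group A" and N: "N \<lhd> G" and K: "subgroup K G"
    and \<phi>: "\<phi> \<in> hom (G\<lparr>carrier := N\<rparr>) A" and \<psi>: "\<psi> \<in> hom (G\<lparr>carrier := K\<rparr>) A"
    and agree: "\<And>z. z \<in> N \<inter> K \<Longrightarrow> \<phi> z = \<psi> z"
    and conj_invariant: "\<And>x y. x \<in> N \<Longrightarrow> y \<in> K \<Longrightarrow> \<phi> (y \<otimes> x \<otimes> inv y) = \<phi> x"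
  shows "\<exists>\<theta>\<in>hom (G\<lparr>carrier := N <#> K\<rparr>) A. (\<forall>x\<in>N. \<theta> x = \<phi> x) \<and> (\<forall>y\<in>K. \<theta> y = \<psi> y)"
proof -
  interpret A: comm_group A by fact
  interpret N: normal N G by fact
  interpret \<phi>: group_hom "G\<lparr>carrier := N\<rparr>" A \<phi>
    using group_hom_on_subgroup[OF N.subgroup_axioms A.is_group \<phi>] .
  interpret \<psi>: group_hom "G\<lparr>carrier := K\<rparr>" A \<psi>
    using group_hom_on_subgroup[OF K A.is_group \<psi>] .
  have NG: "x \<in> carrier G" if "x \<in> N" for x using that N.subset by blast
  have KG: "y \<in> carrier G" if "y \<in> K" for y using that K subgroup.subset by blast
  have \<phi>A: "\<phi> x \<in> carrier A" if "x \<in> N" for x using that \<phi>.hom_closed by simp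
  have \<psi>A: "\<psi> y \<in> carrier A" if "y \<in> K" for y using that \<psi>.hom_closed by simp
  have \<phi>_mult: "\<phi> (x \<otimes> x') = \<phi> x \<otimes>\<^bsub>A\<^esub> \<phi> x'" if "x \<in> N" "x' \<in> N" for x x'
    using that \<phi>.hom_mult by simp
  have \<psi>_mult: "\<psi> (y \<otimes> y') = \<psi> y \<otimes>\<^bsub>A\<^esub> \<psi> y'" if "y \<in> K" "y' \<in> K" for y y'
    using that \<psi>.hom_mult by simp
  obtain \<theta> where \<theta>: "\<And>x y. x \<in> N \<Longrightarrow> y \<in> K \<Longrightarrow> \<theta> (x \<otimes> y) = \<phi> x \<otimes>\<^bsub>A\<^esub> \<psi> y"
    using fun_on_set_mult_exists[OF A N.subgroup_axioms K \<phi> \<psi> agree] by blast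
  have "\<theta> \<in> hom (G\<lparr>carrier := N <#> K\<rparr>) A"
  proof (rule homI)
    fix g assume "g \<in> carrier (G\<lparr>carrier := N <#> K\<rparr>)"
    then obtain x y where "x \<in> N" "y \<in> K" "g = x \<otimes> y" unfolding set_mult_def by auto
    thus "\<theta> g \<in> carrier A" using \<theta> \<phi>A \<psi>A by simp
  next
    fix g g' assume "g \<in> carrier (G\<lparr>carrier := N <#> K\<rparr>)" "g' \<in> carrier (G\<lparr>carrier := N <#> K\<rparr>)"
    then obtain x y x' y' where xy: "x \<in> N" "y \<in> K" "g = x \<otimes> y" "x' \<in> N" "y' \<in> K" "g' = x' \<otimes> y'"
      unfolding set_mult_def by auto
    have conj: "y \<otimes> x' \<otimes> inv y \<in> N" using N.inv_op_closed2 xy KG by blast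
    have "g \<otimes> g' = (x \<otimes> (y \<otimes> x' \<otimes> inv y)) \<otimes> (y \<otimes> y')"
      using xy NG KG by (simp add: m_assoc inv_solve_left)
    hence "\<theta> (g \<otimes> g') = (\<phi> x \<otimes>\<^bsub>A\<^esub> \<phi> x') \<otimes>\<^bsub>A\<^esub> (\<psi> y \<otimes>\<^bsub>A\<^esub> \<psi> y')"
      using \<theta> conj xy conj_invariant K N.m_closed by (simp add: subgroup.m_closed \<phi>_mult \<psi>_mult)
    also have "\<dots> = \<theta> g \<otimes>\<^bsub>A\<^esub> \<theta> g'"
      using \<theta> xy \<phi>A \<psi>A by (simp add: A.m_ac)
    finally show "\<theta> (g \<otimes>\<^bsub>G\<lparr>carrier := N <#> K\<rparr>\<^esub> g') = \<theta> g \<otimes>\<^bsub>A\<^esub> \<theta> g'" by simp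
  qed
  moreover have "\<theta> x = \<phi> x" if "x \<in> N" for x
    using \<theta>[OF that subgroup.one_closed[OF K]] that NG \<phi>A \<psi>.hom_one by simp
  moreover have "\<theta> y = \<psi> y" if "y \<in> K" for y
    using \<theta>[OF N.one_closed that] that KG \<psi>A \<phi>.hom_one by simp
  ultimately show ?thesis by blast
qed

lemma (in group) generate_singleton_hom_exists:
  assumes A: "group A" and c: "c \<in> carrier G" and a: "a \<in> carrier A"
    and ord: "a [^]\<^bsub>A\<^esub> ord c = \<one>\<^bsub>A\<^esub>"
  shows "\<exists>\<psi>\<in>hom (G\<lparr>carrier := generate G {c}\<rparr>) A. \<forall>k::int. \<psi> (c [^] k) = a [^]\<^bsub>A\<^esub> k"
proof -
  interpret A: group A by fact
  have well_defined: "a [^]\<^bsub>A\<^esub> k = a [^]\<^bsub>A\<^esub> l" if "c [^] k = c [^] l" for k l :: int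
  proof -
    have "int (ord c) dvd l - k" using that int_pow_eq[OF c] by simp
    moreover have "A.ord a dvd ord c" using ord A.pow_eq_id[OF a] by simp
    ultimately have "int (A.ord a) dvd l - k" by (meson dvd_trans of_nat_dvd_iff)
    thus ?thesis using A.int_pow_eq[OF a] by simp
  qed
  have "\<exists>\<psi>. \<forall>k::int\<in>UNIV. \<psi> (c [^] k) = a [^]\<^bsub>A\<^esub> k"
    by (rule fun_factors_through, rule well_defined)
  then obtain \<psi> where \<psi>: "\<And>k::int. \<psi> (c [^] k) = a [^]\<^bsub>A\<^esub> k" by blast
  have "\<psi> \<in> hom (G\<lparr>carrier := generate G {c}\<rparr>) A"
  proof (rule homI)
    fix g assume "g \<in> carrier (G\<lparr>carrier := generate G {c}\<rparr>)"
    then obtain k :: int where "g = c [^] k" using generate_pow[OF c] by auto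
    thus "\<psi> g \<in> carrier A" using \<psi> a by simp
  next
    fix g g' assume "g \<in> carrier (G\<lparr>carrier := generate G {c}\<rparr>)" "g' \<in> carrier (G\<lparr>carrier := generate G {c}\<rparr>)"
    then obtain k l :: int where "g = c [^] k" "g' = c [^] l" using generate_pow[OF c] by auto
    thus "\<psi> (g \<otimes>\<^bsub>G\<lparr>carrier := generate G {c}\<rparr>\<^esub> g') = \<psi> g \<otimes>\<^bsub>A\<^esub> \<psi> g'"
      using \<psi>[of "k + l"] \<psi>[of k] \<psi>[of l] c a by (simp add: int_pow_mult A.int_pow_mult)
  qed
  thus ?thesis using \<psi> by blast
qed

lemma (in group) extend_hom_by_element:
  assumes A: "comm_group A" and B: "subgroup B G" and DB: "derived G (carrier G) \<subseteq> B"
    and \<phi>: "\<phi> \<in> hom (G\<lparr>carrier := B\<rparr>) A"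
    and kill: "\<And>d. d \<in> derived G (carrier G) \<Longrightarrow> \<phi> d = \<one>\<^bsub>A\<^esub>"
    and c: "c \<in> carrier G" and a: "a \<in> carrier A"
    and compatible: "\<And>k::int. c [^] k \<in> B \<Longrightarrow> a [^]\<^bsub>A\<^esub> k = \<phi> (c [^] k)"
  shows "\<exists>\<phi>'\<in>hom (G\<lparr>carrier := B <#> generate G {c}\<rparr>) A. (\<forall>b\<in>B. \<phi>' b = \<phi> b) \<and> \<phi>' c = a"
proof -
  interpret A: comm_group A by fact
  interpret \<phi>: group_hom "G\<lparr>carrier := B\<rparr>" A \<phi> using group_hom_on_subgroup[OF B A.is_group \<phi>] .
  have BG: "b \<in> carrier G" if "b \<in> B" for b using that B subgroup.subset by blast
  have "a [^]\<^bsub>A\<^esub> int (ord c) = \<phi> \<one>"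
    using compatible[of "int (ord c)"] c subgroup.one_closed[OF B] by (simp add: int_pow_int)
  hence "a [^]\<^bsub>A\<^esub> ord c = \<one>\<^bsub>A\<^esub>" using \<phi>.hom_one by (simp add: int_pow_int)
  then obtain \<psi> where \<psi>: "\<psi> \<in> hom (G\<lparr>carrier := generate G {c}\<rparr>) A"
    and \<psi>_pow: "\<And>k::int. \<psi> (c [^] k) = a [^]\<^bsub>A\<^esub> k"
    using generate_singleton_hom_exists[OF A.is_group c a] by blast
  have "\<exists>\<phi>'\<in>hom (G\<lparr>carrier := B <#> generate G {c}\<rparr>) A.
          (\<forall>b\<in>B. \<phi>' b = \<phi> b) \<and> (\<forall>y\<in>generate G {c}. \<phi>' y = \<psi> y)"
  proof (rule extend_hom_over_set_mult[OF A normal_if_derived_subset[OF B DB] _ \<phi> \<psi>])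
    show "subgroup (generate G {c}) G" using c by (simp add: generate_is_subgroup)
  next
    fix z assume "z \<in> B \<inter> generate G {c}"
    then obtain k :: int where "z = c [^] k" "c [^] k \<in> B" using generate_pow[OF c] by auto
    thus "\<phi> z = \<psi> z" using compatible \<psi>_pow by simp
  next
    fix b y assume b: "b \<in> B" and y: "y \<in> generate G {c}"
    have yG: "y \<in> carrier G" using y c generate_incl by blast
    define d where "d = y \<otimes> b \<otimes> inv y \<otimes> inv b"
    have d: "d \<in> derived G (carrier G)" unfolding d_def using commutator_mem_derived yG BG b by blast
    have "y \<otimes> b \<otimes> inv y = d \<otimes> b" unfolding d_def using yG BG b by (simp add: m_assoc)
    thus "\<phi> (y \<otimes> b \<otimes> inv y) = \<phi> b" using d DB b kill \<phi>.hom_mult \<phi>.hom_closed by auto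
  qed
  moreover have "c \<in> generate G {c}" by (rule generate.incl) simp
  moreover have "\<psi> c = a" using \<psi>_pow[of 1] c a by simp
  ultimately show ?thesis by metis
qed

lemma (in group) compatible_root_exists:
  assumes fin: "finite (carrier G)" and A: "comm_group A" and hyp: "satisfies_hypothesis A \<pi>"
    and \<pi>G: "pi_number \<pi> (order G)"
    and B: "subgroup B G" and \<phi>: "\<phi> \<in> hom (G\<lparr>carrier := B\<rparr>) A" and c: "c \<in> carrier G"
  shows "\<exists>a\<in>carrier A. \<forall>k::int. c [^] k \<in> B \<longrightarrow> a [^]\<^bsub>A\<^esub> k = \<phi> (c [^] k)"
proof -
  interpret A: comm_group A by fact
  interpret \<phi>: group_hom "G\<lparr>carrier := B\<rparr>" A \<phi> using group_hom_on_subgroup[OF B A.is_group \<phi>] .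
  have \<phi>_pow: "\<phi> (b [^] k) = \<phi> b [^]\<^bsub>A\<^esub> k" if "b \<in> B" for b and k :: int
    using that \<phi>.hom_int_pow int_pow_consistent[OF B] by simp
  obtain m where m: "\<And>k::int. c [^] k \<in> B \<longleftrightarrow> int m dvd k"
    using int_pow_mem_subgroup_iff_dvd[OF fin B c] by blast
  have cm: "c [^] int m \<in> B" using m by simp
  have "c [^] int (ord c) \<in> B" using c subgroup.one_closed[OF B] by (simp add: int_pow_int)
  hence "m dvd ord c" using m by simp
  then obtain q where q: "ord c = m * q" by blast
  have \<pi>_mq: "pi_number \<pi> (m * q)" using pi_number_dvd[OF \<pi>G ord_dvd_group_order[OF c]] q by simp
  have "\<phi> (c [^] int m) [^]\<^bsub>A\<^esub> int q = \<phi> ((c [^] int m) [^] int q)"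
    using \<phi>_pow[OF cm] by simp
  also have "(c [^] int m) [^] int q = c [^] int (ord c)" using c q by (simp add: int_pow_pow)
  also have "\<phi> (c [^] int (ord c)) = \<one>\<^bsub>A\<^esub>" using c \<phi>.hom_one by (simp add: int_pow_int)
  finally have "\<phi> (c [^] int m) [^]\<^bsub>A\<^esub> q = \<one>\<^bsub>A\<^esub>" by (simp add: int_pow_int)
  moreover have "\<phi> (c [^] int m) \<in> carrier A" using \<phi>.hom_closed cm by simp
  ultimately obtain a where a: "a \<in> carrier A" "a [^]\<^bsub>A\<^esub> m = \<phi> (c [^] int m)"
    using A.hypothesis_root_exists[OF hyp \<pi>_mq] by blast
  have "a [^]\<^bsub>A\<^esub> k = \<phi> (c [^] k)" if "c [^] k \<in> B" for k :: int
  proof -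
    have "int m dvd k" using m that by simp
    then obtain t where t: "k = int m * t" by blast
    have "a [^]\<^bsub>A\<^esub> k = (a [^]\<^bsub>A\<^esub> int m) [^]\<^bsub>A\<^esub> t" using a(1) t by (simp add: A.int_pow_pow)
    also have "\<dots> = \<phi> (c [^] int m) [^]\<^bsub>A\<^esub> t" using a(2) by (simp add: int_pow_int)
    also have "\<dots> = \<phi> (c [^] k)" using \<phi>_pow[OF cm] t c by (simp add: int_pow_pow)
    finally show ?thesis .
  qed
  thus ?thesis using a by blast
qed

lemma (in group) extend_hom_from_subgroup_above_derived:
  assumes fin: "finite (carrier G)" and A: "comm_group A" and hyp: "satisfies_hypothesis A \<pi>"
    and \<pi>G: "pi_number \<pi> (order G)"
  shows "subgroup B G \<Longrightarrow> derived G (carrier G) \<subseteq> B \<Longrightarrow> \<phi> \<in> hom (G\<lparr>carrier := B\<rparr>) A \<Longrightarrow>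
    (\<And>d. d \<in> derived G (carrier G) \<Longrightarrow> \<phi> d = \<one>\<^bsub>A\<^esub>) \<Longrightarrow> \<exists>\<Phi>\<in>hom G A. \<forall>b\<in>B. \<Phi> b = \<phi> b"
proof (induction "card (carrier G) - card B" arbitrary: B \<phi> rule: less_induct)
  case less
  note B = less.prems(1) and DB = less.prems(2) and \<phi> = less.prems(3) and kill = less.prems(4)
  show ?case
  proof (cases "B = carrier G")
    case True
    thus ?thesis using \<phi> by auto
  next
    case False
    then obtain c where c: "c \<in> carrier G" "c \<notin> B" using B subgroup.subset by blast
    obtain a where a: "a \<in> carrier A" "\<And>k::int. c [^] k \<in> B \<Longrightarrow> a [^]\<^bsub>A\<^esub> k = \<phi> (c [^] k)"
      using compatible_root_exists[OF fin A hyp \<pi>G B \<phi> c(1)] by blast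
    define B' where "B' = B <#> generate G {c}"
    obtain \<phi>' where \<phi>': "\<phi>' \<in> hom (G\<lparr>carrier := B'\<rparr>) A" "\<forall>b\<in>B. \<phi>' b = \<phi> b"
      using extend_hom_by_element[OF A B DB \<phi> kill c(1) a] unfolding B'_def by blast
    interpret BC: second_isomorphism_grp B G "generate G {c}"
      using normal_if_derived_subset[OF B DB] generate_is_subgroup c(1)
      by (simp add: second_isomorphism_grp_def second_isomorphism_grp_axioms_def)
    have B': "subgroup B' G" unfolding B'_def by (rule BC.normal_set_mult_subgroup)
    have "B \<subset> B'"
      using BC.H_contained_in_set_mult BC.S_contained_in_set_mult generate.incl[of c "{c}" G] c(2)
      unfolding B'_def by blast
    moreover have "B' \<subseteq> carrier G" using B' subgroup.subset by blast
    ultimately have "card (carrier G) - card B' < card (carrier G) - card B"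
      using fin by (meson diff_less_mono2 finite_subset psubset_card_mono card_mono less_le_trans)
    moreover have "derived G (carrier G) \<subseteq> B'" using DB \<open>B \<subset> B'\<close> by blast
    moreover have "\<phi>' d = \<one>\<^bsub>A\<^esub>" if "d \<in> derived G (carrier G)" for d using that DB kill \<phi>'(2) by auto
    ultimately obtain \<Phi> where \<Phi>: "\<Phi> \<in> hom G A" "\<forall>b\<in>B'. \<Phi> b = \<phi>' b"
      using less.hyps B' \<phi>'(1) by blast
    have "\<forall>b\<in>B. \<Phi> b = \<phi> b" using \<Phi>(2) \<phi>'(2) \<open>B \<subset> B'\<close> by auto
    thus ?thesis using \<Phi>(1) by blast
  qed
qed

lemma (in group) extend_hom_killing_derived:
  assumes fin: "finite (carrier G)" and A: "comm_group A" and hyp: "satisfies_hypothesis A \<pi>"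
    and \<pi>G: "pi_number \<pi> (order G)"
    and B: "subgroup B G" and \<phi>: "\<phi> \<in> hom (G\<lparr>carrier := B\<rparr>) A"
    and kill: "\<And>d. d \<in> B \<inter> derived G (carrier G) \<Longrightarrow> \<phi> d = \<one>\<^bsub>A\<^esub>"
  shows "\<exists>\<Phi>\<in>hom G A. \<forall>b\<in>B. \<Phi> b = \<phi> b"
proof -
  interpret A: comm_group A by fact
  interpret DB: second_isomorphism_grp "derived G (carrier G)" G B
    using derived_self_is_normal B
    by (simp add: second_isomorphism_grp_def second_isomorphism_grp_axioms_def)
  have trivial: "(\<lambda>_. \<one>\<^bsub>A\<^esub>) \<in> hom (G\<lparr>carrier := derived G (carrier G)\<rparr>) A" by (rule homI) auto
  have "\<exists>\<phi>'\<in>hom (G\<lparr>carrier := derived G (carrier G) <#> B\<rparr>) A.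
          (\<forall>d\<in>derived G (carrier G). \<phi>' d = \<one>\<^bsub>A\<^esub>) \<and> (\<forall>b\<in>B. \<phi>' b = \<phi> b)"
    by (rule extend_hom_over_set_mult[OF A derived_self_is_normal B trivial \<phi>]) (use kill in auto)
  then obtain \<phi>' where \<phi>': "\<phi>' \<in> hom (G\<lparr>carrier := derived G (carrier G) <#> B\<rparr>) A"
    "\<forall>d\<in>derived G (carrier G). \<phi>' d = \<one>\<^bsub>A\<^esub>" "\<forall>b\<in>B. \<phi>' b = \<phi> b"
    by blast
  obtain \<Phi> where \<Phi>: "\<Phi> \<in> hom G A" "\<forall>b\<in>derived G (carrier G) <#> B. \<Phi> b = \<phi>' b"
    using extend_hom_from_subgroup_above_derived[OF fin A hyp \<pi>G DB.normal_set_mult_subgroup _ \<phi>'(1)]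
      DB.H_contained_in_set_mult \<phi>'(2) by blast
  have "\<forall>b\<in>B. \<Phi> b = \<phi> b"
  proof
    fix b assume b: "b \<in> B"
    hence "b \<in> derived G (carrier G) <#> B" using DB.S_contained_in_set_mult by blast
    thus "\<Phi> b = \<phi> b" using \<Phi>(2) \<phi>'(3) b by simp
  qed
  thus ?thesis using \<Phi>(1) by blast
qed

lemma (in group) hom_nontrivial_outside_derived:
  assumes fin: "finite (carrier G)" and A: "comm_group A" and hyp: "satisfies_hypothesis A \<pi>"
    and \<pi>G: "pi_number \<pi> (order G)"
    and u: "u \<in> carrier G" "u \<notin> derived G (carrier G)"
  shows "\<exists>F\<in>hom G A. F u \<noteq> \<one>\<^bsub>A\<^esub>"
proof -
  interpret A: comm_group A by fact
  define D where "D = derived G (carrier G)"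
  have D: "subgroup D G" unfolding D_def by (simp add: derived_is_subgroup)
  obtain m where m: "\<And>k::int. u [^] k \<in> D \<longleftrightarrow> int m dvd k"
    using int_pow_mem_subgroup_iff_dvd[OF fin D u(1)] by blast
  have "u [^] int (ord u) \<in> D" using u(1) subgroup.one_closed[OF D] by (simp add: int_pow_int)
  hence m_ord: "m dvd ord u" using m by simp
  hence \<pi>m: "pi_number \<pi> m" using pi_number_dvd[OF \<pi>G dvd_trans[OF _ ord_dvd_group_order[OF u(1)]]] by blast
  have "m \<noteq> 1" using m[of 1] u unfolding D_def by auto
  hence "m > 1" using \<pi>m unfolding pi_number_def by simp
  obtain a where a: "a \<in> carrier A" "A.ord a = m"
    using A.hypothesis_torsion_generator[OF hyp \<pi>m] by metis
  have "a [^]\<^bsub>A\<^esub> ord u = \<one>\<^bsub>A\<^esub>" using a m_ord A.pow_eq_id by simp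
  then obtain \<psi> where \<psi>: "\<psi> \<in> hom (G\<lparr>carrier := generate G {u}\<rparr>) A"
    and \<psi>_pow: "\<And>k::int. \<psi> (u [^] k) = a [^]\<^bsub>A\<^esub> k"
    using generate_singleton_hom_exists[OF A.is_group u(1) a(1)] by blast
  have kill: "\<psi> z = \<one>\<^bsub>A\<^esub>" if z: "z \<in> generate G {u} \<inter> derived G (carrier G)" for z
  proof -
    obtain k :: int where k: "z = u [^] k" using IntD1[OF z] generate_pow[OF u(1)] by blast
    hence "int m dvd k" using m z unfolding D_def by simp
    thus ?thesis using k \<psi>_pow A.int_pow_eq_id a by simp
  qed
  have "subgroup (generate G {u}) G" using u(1) by (simp add: generate_is_subgroup)
  then obtain F where F: "F \<in> hom G A" "\<forall>z\<in>generate G {u}. F z = \<psi> z"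
    using extend_hom_killing_derived[OF fin A hyp \<pi>G _ \<psi> kill] by blast
  have "F u = a" using F(2) \<psi>_pow[of 1] generate.incl[of u "{u}" G] u(1) a(1) by simp
  moreover have "a \<noteq> \<one>\<^bsub>A\<^esub>" using a \<open>m > 1\<close> A.ord_eq_1 by auto
  ultimately show ?thesis using F(1) by blast
qed

lemma (in group) homs_extend_iff_derived:
  assumes fin: "finite (carrier G)" and A: "comm_group A" and hyp: "satisfies_hypothesis A \<pi>"
    and \<pi>G: "pi_number \<pi> (order G)" and U: "subgroup U G"
  shows "(\<forall>f\<in>hom (G\<lparr>carrier := U\<rparr>) A. \<exists>F\<in>hom G A. \<forall>u\<in>U. F u = f u)
           \<longleftrightarrow> U \<inter> derived G (carrier G) \<subseteq> derived G U"
proof -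
  interpret U: group "G\<lparr>carrier := U\<rparr>" using subgroup_imp_group[OF U] .
  have derived_U: "derived (G\<lparr>carrier := U\<rparr>) (carrier (G\<lparr>carrier := U\<rparr>)) = derived G U"
    using derived_consistent[OF _ U] by simp
  show ?thesis
  proof
    assume extend: "\<forall>f\<in>hom (G\<lparr>carrier := U\<rparr>) A. \<exists>F\<in>hom G A. \<forall>u\<in>U. F u = f u"
    show "U \<inter> derived G (carrier G) \<subseteq> derived G U"
    proof
      fix x assume x: "x \<in> U \<inter> derived G (carrier G)"
      show "x \<in> derived G U"
      proof (rule ccontr)
        assume "x \<notin> derived G U"
        have "finite U" using fin U subgroup.subset finite_subset by blast
        moreover have "pi_number \<pi> (card U)"
          using pi_number_dvd[OF \<pi>G] lagrange[OF U] by (metis dvd_triv_right)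
        ultimately obtain f where f: "f \<in> hom (G\<lparr>carrier := U\<rparr>) A" "f x \<noteq> \<one>\<^bsub>A\<^esub>"
          using U.hom_nontrivial_outside_derived[OF _ A hyp, of x] x \<open>x \<notin> derived G U\<close> derived_U
          unfolding order_def by auto
        then obtain F where "F \<in> hom G A" "\<forall>u\<in>U. F u = f u" using extend by blast
        thus False using hom_to_comm_group_kills_derived[OF A] x f(2) by auto
      qed
    qed
  next
    assume "U \<inter> derived G (carrier G) \<subseteq> derived G U"
    thus "\<forall>f\<in>hom (G\<lparr>carrier := U\<rparr>) A. \<exists>F\<in>hom G A. \<forall>u\<in>U. F u = f u"
      using extend_hom_killing_derived[OF fin A hyp \<pi>G U] U.hom_to_comm_group_kills_derived[OF A]
        derived_U by blast
  qed
qed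

section \<open>Subdirect products\<close>

lemma (in group_hom) image_derived_subset: "h ` derived G (carrier G) \<subseteq> derived H (carrier H)"
proof -
  have "h ` derived G (carrier G) = derived H (h ` carrier G)" by (simp add: derived_img)
  also have "\<dots> \<subseteq> derived H (carrier H)" by (rule H.mono_derived) auto
  finally show ?thesis .
qed

lemma group_hom_fst: "group G \<Longrightarrow> group H \<Longrightarrow> group_hom (G \<times>\<times> H) G fst"
  by (auto simp: group_hom_def group_hom_axioms_def DirProd_group mult_DirProd' intro!: homI)

lemma group_hom_snd: "group G \<Longrightarrow> group H \<Longrightarrow> group_hom (G \<times>\<times> H) H snd"
  by (auto simp: group_hom_def group_hom_axioms_def DirProd_group mult_DirProd' intro!: homI)

lemma derived_DirProd:
  assumes G: "group G" and H: "group H"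
  shows "derived (G \<times>\<times> H) (carrier (G \<times>\<times> H)) = derived G (carrier G) \<times> derived H (carrier H)"
proof
  interpret G: group G by fact
  interpret H: group H by fact
  interpret GH: group "G \<times>\<times> H" using DirProd_group[OF G H] .
  show "derived (G \<times>\<times> H) (carrier (G \<times>\<times> H)) \<subseteq> derived G (carrier G) \<times> derived H (carrier H)"
    using group_hom.image_derived_subset[OF group_hom_fst[OF G H]]
      group_hom.image_derived_subset[OF group_hom_snd[OF G H]] by (auto simp: mem_Times_iff)
  have "group_hom G (G \<times>\<times> H) (\<lambda>g. (g, \<one>\<^bsub>H\<^esub>))" "group_hom H (G \<times>\<times> H) (\<lambda>h. (\<one>\<^bsub>G\<^esub>, h))"
    by (auto simp: group_hom_def group_hom_axioms_def DirProd_group G H intro!: homI)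
  note embeddings = this[THEN group_hom.image_derived_subset]
  show "derived G (carrier G) \<times> derived H (carrier H) \<subseteq> derived (G \<times>\<times> H) (carrier (G \<times>\<times> H))"
  proof safe
    fix g h assume g: "g \<in> derived G (carrier G)" and h: "h \<in> derived H (carrier H)"
    have "g \<in> carrier G" "h \<in> carrier H"
      using g h G.derived_in_carrier[OF subset_refl] H.derived_in_carrier[OF subset_refl] by blast+
    hence "(g, h) = (g, \<one>\<^bsub>H\<^esub>) \<otimes>\<^bsub>G \<times>\<times> H\<^esub> (\<one>\<^bsub>G\<^esub>, h)" by simp
    also have "\<dots> \<in> derived (G \<times>\<times> H) (carrier (G \<times>\<times> H))"
      using g h embeddings subgroup.m_closed[OF GH.derived_is_subgroup[OF subset_refl]] by blast
    finally show "(g, h) \<in> derived (G \<times>\<times> H) (carrier (G \<times>\<times> H))" .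
  qed
qed

lemma (in group_hom) subgroup_subset_iff_inter_kernel:
  assumes S: "subgroup S G" and D: "subgroup D G" and DS: "D \<subseteq> S" and img: "h ` S \<subseteq> h ` D"
  shows "S \<subseteq> D \<longleftrightarrow> S \<inter> kernel G H h \<subseteq> D"
proof
  show "S \<inter> kernel G H h \<subseteq> D" if "S \<subseteq> D" using that by blast
next
  assume "S \<inter> kernel G H h \<subseteq> D"
  show "S \<subseteq> D"
  proof
    fix x assume x: "x \<in> S"
    have "h x \<in> h ` D" using img x by blast
    then obtain d where d: "d \<in> D" "h d = h x" by (metis imageE)
    have xG: "x \<in> carrier G" and dG: "d \<in> carrier G" using x d S D subgroup.subset by blast+
    have "inv d \<in> S" using d DS subgroup.m_inv_closed[OF S] by blast
    hence "x \<otimes> inv d \<in> S" using subgroup.m_closed[OF S x] by blast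
    moreover have "x \<otimes> inv d \<in> kernel G H h" unfolding kernel_def using xG dG d by simp
    ultimately have "x \<otimes> inv d \<in> D" using \<open>S \<inter> kernel G H h \<subseteq> D\<close> by blast
    hence "x \<otimes> inv d \<otimes> d \<in> D" using subgroup.m_closed[OF D] d(1) by blast
    moreover have "x \<otimes> inv d \<otimes> d = x" using xG dG by (simp add: G.m_assoc)
    ultimately show "x \<in> D" by simp
  qed
qed

lemma (in group_hom) inter_derived_subset_iff_kernel:
  assumes U: "subgroup U G" and img: "h ` derived G (carrier G) \<subseteq> h ` derived G U"
  shows "U \<inter> derived G (carrier G) \<subseteq> derived G U
           \<longleftrightarrow> U \<inter> derived G (carrier G) \<inter> kernel G H h \<subseteq> derived G U"
proof (rule subgroup_subset_iff_inter_kernel)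
  have "U \<subseteq> carrier G" using U subgroup.subset by blast
  thus "subgroup (U \<inter> derived G (carrier G)) G" "subgroup (derived G U) G"
    using subgroup_Int[OF U G.derived_is_subgroup[OF subset_refl]] G.derived_is_subgroup by auto
  show "derived G U \<subseteq> U \<inter> derived G (carrier G)"
    using G.derived_incl[OF subset_refl U] G.mono_derived[OF \<open>U \<subseteq> _\<close>] by blast
  show "h ` (U \<inter> derived G (carrier G)) \<subseteq> h ` derived G U" using img by blast
qed

lemma subdirect_derived:
  assumes G: "group G" and H: "group H" and U: "subdirect G H U"
  shows "derived (G \<times>\<times> H) U \<subseteq> U \<inter> (derived G (carrier G) \<times> derived H (carrier H))"
    and "fst ` derived (G \<times>\<times> H) U = derived G (carrier G)"
    and "snd ` derived (G \<times>\<times> H) U = derived H (carrier H)"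
proof -
  interpret GH: group "G \<times>\<times> H" using DirProd_group[OF G H] .
  have U_sub: "subgroup U (G \<times>\<times> H)" and U_fst: "fst ` U = carrier G" and U_snd: "snd ` U = carrier H"
    using U unfolding subdirect_def by simp_all
  have "U \<subseteq> carrier (G \<times>\<times> H)" using U_sub subgroup.subset by blast
  hence "derived (G \<times>\<times> H) U \<subseteq> derived (G \<times>\<times> H) (carrier (G \<times>\<times> H))" by (rule GH.mono_derived)
  moreover have "derived (G \<times>\<times> H) U \<subseteq> U" using GH.derived_incl[OF subset_refl U_sub] .
  ultimately show "derived (G \<times>\<times> H) U \<subseteq> U \<inter> (derived G (carrier G) \<times> derived H (carrier H))"
    using derived_DirProd[OF G H] by blast
  show "fst ` derived (G \<times>\<times> H) U = derived G (carrier G)"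
    using group_hom.derived_img[OF group_hom_fst[OF G H] \<open>U \<subseteq> _\<close>] U_fst by simp
  show "snd ` derived (G \<times>\<times> H) U = derived H (carrier H)"
    using group_hom.derived_img[OF group_hom_snd[OF G H] \<open>U \<subseteq> _\<close>] U_snd by simp
qed

lemma subdirect_derived_subset_iff_k1:
  assumes G: "group G" and H: "group H" and U: "subdirect G H U"
  shows "U \<inter> derived (G \<times>\<times> H) (carrier (G \<times>\<times> H)) \<subseteq> derived (G \<times>\<times> H) U
           \<longleftrightarrow> derived G (carrier G) \<inter> k1 H U = k1 H (derived (G \<times>\<times> H) U)"
proof -
  interpret snd: group_hom "G \<times>\<times> H" H snd using group_hom_snd[OF G H] .
  have U_sub: "subgroup U (G \<times>\<times> H)" using U unfolding subdirect_def by simp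
  have "snd ` derived (G \<times>\<times> H) (carrier (G \<times>\<times> H)) \<subseteq> snd ` derived (G \<times>\<times> H) U"
    using derived_DirProd[OF G H] subdirect_derived(3)[OF G H U] by auto
  hence "U \<inter> derived (G \<times>\<times> H) (carrier (G \<times>\<times> H)) \<subseteq> derived (G \<times>\<times> H) U
      \<longleftrightarrow> U \<inter> derived (G \<times>\<times> H) (carrier (G \<times>\<times> H)) \<inter> kernel (G \<times>\<times> H) H snd \<subseteq> derived (G \<times>\<times> H) U"
    by (rule snd.inter_derived_subset_iff_kernel[OF U_sub])
  also have "\<dots> \<longleftrightarrow> derived G (carrier G) \<inter> k1 H U \<subseteq> k1 H (derived (G \<times>\<times> H) U)"
    using derived_DirProd[OF G H] group.derived_in_carrier[OF G subset_refl]
      subgroup.one_closed[OF group.derived_is_subgroup[OF H subset_refl]]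
    unfolding kernel_def k1_def by auto
  also have "\<dots> \<longleftrightarrow> derived G (carrier G) \<inter> k1 H U = k1 H (derived (G \<times>\<times> H) U)"
    using subdirect_derived(1)[OF G H U] unfolding k1_def by auto
  finally show ?thesis .
qed

lemma subdirect_derived_subset_iff_k2:
  assumes G: "group G" and H: "group H" and U: "subdirect G H U"
  shows "U \<inter> derived (G \<times>\<times> H) (carrier (G \<times>\<times> H)) \<subseteq> derived (G \<times>\<times> H) U
           \<longleftrightarrow> derived H (carrier H) \<inter> k2 G U = k2 G (derived (G \<times>\<times> H) U)"
proof -
  interpret fst: group_hom "G \<times>\<times> H" G fst using group_hom_fst[OF G H] .
  have U_sub: "subgroup U (G \<times>\<times> H)" using U unfolding subdirect_def by simp
  have "fst ` derived (G \<times>\<times> H) (carrier (G \<times>\<times> H)) \<subseteq> fst ` derived (G \<times>\<times> H) U"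
    using derived_DirProd[OF G H] subdirect_derived(2)[OF G H U] by auto
  hence "U \<inter> derived (G \<times>\<times> H) (carrier (G \<times>\<times> H)) \<subseteq> derived (G \<times>\<times> H) U
      \<longleftrightarrow> U \<inter> derived (G \<times>\<times> H) (carrier (G \<times>\<times> H)) \<inter> kernel (G \<times>\<times> H) G fst \<subseteq> derived (G \<times>\<times> H) U"
    by (rule fst.inter_derived_subset_iff_kernel[OF U_sub])
  also have "\<dots> \<longleftrightarrow> derived H (carrier H) \<inter> k2 G U \<subseteq> k2 G (derived (G \<times>\<times> H) U)"
    using derived_DirProd[OF G H] group.derived_in_carrier[OF H subset_refl]
      subgroup.one_closed[OF group.derived_is_subgroup[OF G subset_refl]]
    unfolding kernel_def k2_def by auto
  also have "\<dots> \<longleftrightarrow> derived H (carrier H) \<inter> k2 G U = k2 G (derived (G \<times>\<times> H) U)"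
    using subdirect_derived(1)[OF G H U] unfolding k2_def by auto
  finally show ?thesis .
qed

theorem theorem3p2:
  fixes G :: "('a, 'c) monoid_scheme" and H :: "('b, 'd) monoid_scheme"
    and A :: "('e, 'f) monoid_scheme" and U :: "('a \<times> 'b) set" and \<pi> :: "nat set"
  assumes "group G" and "group H" and "finite (carrier G)" and "finite (carrier H)"
    and "subdirect G H U"
    and "comm_group A" and "satisfies_hypothesis A \<pi>"
    and "\<And>p::nat. Factorial_Ring.prime p \<Longrightarrow> p dvd order G \<Longrightarrow> p \<in> \<pi>"
    and "\<And>p::nat. Factorial_Ring.prime p \<Longrightarrow> p dvd order H \<Longrightarrow> p \<in> \<pi>"
  shows "(restriction_surjective G H U A \<longleftrightarrow>
           derived G (carrier G) \<inter> k1 H U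
             = k1 H (derived ((G \<times>\<times> H)\<lparr>carrier := U\<rparr>) U))
       \<and> (restriction_surjective G H U A \<longleftrightarrow>
           derived H (carrier H) \<inter> k2 G U
             = k2 G (derived ((G \<times>\<times> H)\<lparr>carrier := U\<rparr>) U))"
proof -
  note G = assms(1) and H = assms(2) and U = assms(5)
  interpret G: group G by fact
  interpret H: group H by fact
  interpret GH: group "G \<times>\<times> H" using DirProd_group[OF G H] .
  have U_sub: "subgroup U (G \<times>\<times> H)" using U unfolding subdirect_def by simp
  have "pi_number \<pi> (order G)" "pi_number \<pi> (order H)"
    using assms(3,4,8,9) G.order_gt_0_iff_finite H.order_gt_0_iff_finite
    unfolding pi_number_def by auto
  hence "pi_number \<pi> (order (G \<times>\<times> H))"
    unfolding order_def by (simp add: card_cartesian_product pi_number_mult)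
  hence "restriction_surjective G H U A
           \<longleftrightarrow> U \<inter> derived (G \<times>\<times> H) (carrier (G \<times>\<times> H)) \<subseteq> derived (G \<times>\<times> H) U"
    unfolding restriction_surjective_def
    using GH.homs_extend_iff_derived[OF _ assms(6,7) _ U_sub] assms(3,4) by simp
  moreover have "derived ((G \<times>\<times> H)\<lparr>carrier := U\<rparr>) U = derived (G \<times>\<times> H) U"
    using GH.derived_consistent[OF subset_refl U_sub] .
  ultimately show ?thesis
    using subdirect_derived_subset_iff_k1[OF G H U] subdirect_derived_subset_iff_k2[OF G H U] by simp
qed

end
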